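(* Let $\alpha\in(0,1)$, $\sigma=1-\frac{\alpha}{2}$, and let $c^{(\alpha,\sigma)}_{i,k}$ be the L2-1$_\sigma$ coefficients defined in the context. Let $k\ge0$. Then for sufficiently small temporal stepsize $\tau$: (1) for any one-dimensional grid functions $v^0,\dots,v^{k+1}\in\mathcal{U}_h$, $$\sum_{i=1}^{k+1}c^{(\alpha,\sigma)}_{i,k}\big(v^i-v^{i-1},\sigma v^{k+1}+(1-\sigma)v^k\big)_h\ge\frac12\sum_{i=1}^{k+1}c^{(\alpha,\sigma)}_{i,k}\big(\|v^i\|_h^2-\|v^{i-1}\|_h^2\big);$$ (2) for any two-dimensional grid functions $w^0,\dots,w^{k+1}\in\mathcal{S}^\circ_h$, $$\sum_{i=1}^{k+1}c^{(\alpha,\sigma)}_{i,k}\big(w^i-w^{i-1},\sigma w^{k+1}+(1-\sigma)w^k\big)_{h^2}\ge\frac12\sum_{i=1}^{k+1}c^{(\alpha,\sigma)}_{i,k}\big(\|w^i\|_{L^2_h}^2-\|w^{i-1}\|_{L^2_h}^2\big).$$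
   Context: Time grid: $\tilde a>0$, $T>\tilde a$, $N\in\mathbb{Z}^+$, $\tau=(T-\tilde a)/N$, $t_k=\tilde a+k\tau$, $t_{k+\sigma}=t_k+\sigma\tau$. For $1\le i\le k$: $a^{(\alpha,\sigma)}_{i,k}=(\log\frac{t_{k+\sigma}}{t_{i-1}})^{1-\alpha}-(\log\frac{t_{k+\sigma}}{t_{i}})^{1-\alpha}$, $b^{(\alpha,\sigma)}_{i,k}=\frac{1}{\log\frac{t_{i+1}}{t_{i-1}}}\{\frac{2}{2-\alpha}[(\log\frac{t_{k+\sigma}}{t_{i-1}})^{2-\alpha}-(\log\frac{t_{k+\sigma}}{t_{i}})^{2-\alpha}]-\log\frac{t_i}{t_{i-1}}[(\log\frac{t_{k+\sigma}}{t_{i}})^{1-\alpha}+(\log\frac{t_{k+\sigma}}{t_{i-1}})^{1-\alpha}]\}$. Coefficients: $c^{(\alpha,\sigma)}_{1,0}=\frac{(\log\frac{t_\sigma}{t_0})^{1-\alpha}}{\Gamma(2-\alpha)\log\frac{t_1}{t_0}}$; for $k\ge1$: $c^{(\alpha,\sigma)}_{1,k}=\frac{a^{(\alpha,\sigma)}_{1,k}-b^{(\alpha,\sigma)}_{1,k}}{\Gamma(2-\alpha)\log\frac{t_1}{t_0}}$, $c^{(\alpha,\sigma)}_{i,k}=\frac{a^{(\alpha,\sigma)}_{i,k}+b^{(\alpha,\sigma)}_{i-1,k}-b^{(\alpha,\sigma)}_{i,k}}{\Gamma(2-\alpha)\log\frac{t_i}{t_{i-1}}}$ for $2\le i\le k$,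 $c^{(\alpha,\sigma)}_{k+1,k}=\frac{b^{(\alpha,\sigma)}_{k,k}+(\log\frac{t_{k+\sigma}}{t_k})^{1-\alpha}}{\Gamma(2-\alpha)\log\frac{t_{k+1}}{t_k}}$. One-dimensional grid: $\mathcal{U}_h=\{w=(w_0,\dots,w_M)\}$ on $x_j=a+jh$, $h=(b-a)/M$; $(w,v)_h=h\sum_{j=1}^{M-1}w_jv_j$, $\|w\|_h^2=(w,w)_h$. Two-dimensional grid: $x_j=-L+jh$, $y_k=-L+kh$, $h=2L/M$; $\mathcal{S}^\circ_h$ is the set of grid functions $\{w_{jk}\}_{0\le j,k\le M}$ with $w_{jk}=0$ on the boundary points; $(w,v)_{h^2}=h^2\sum_{j=1}^{M-1}\sum_{k=1}^{M-1}w_{jk}v_{jk}$, $\|w\|^2_{L^2_h}=(w,w)_{h^2}$. *)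

theory Defs
  imports "HOL-Analysis.Analysis"
begin

text \<open>Temporal grid: t_s = a0 + s * tau, tau = (T - a0)/N, a0 = tilde a, for real s (so t_{k+sigma} = tg a0 T N (k + sigma)).\<close>
definition tg :: "real \<Rightarrow> real \<Rightarrow> nat \<Rightarrow> real \<Rightarrow> real" where
  "tg a0 T N s = a0 + s * ((T - a0) / real N)"

definition acoef :: "real \<Rightarrow> real \<Rightarrow> nat \<Rightarrow> real \<Rightarrow> real \<Rightarrow> nat \<Rightarrow> nat \<Rightarrow> real" where
  "acoef a0 T N \<alpha> \<sigma> i k =
     (ln (tg a0 T N (real k + \<sigma>) / tg a0 T N (real i - 1))) powr (1 - \<alpha>)
   - (ln (tg a0 T N (real k + \<sigma>) / tg a0 T N (real i))) powr (1 - \<alpha>)"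

definition bcoef :: "real \<Rightarrow> real \<Rightarrow> nat \<Rightarrow> real \<Rightarrow> real \<Rightarrow> nat \<Rightarrow> nat \<Rightarrow> real" where
  "bcoef a0 T N \<alpha> \<sigma> i k =
     (1 / ln (tg a0 T N (real i + 1) / tg a0 T N (real i - 1))) *
     ( (2 / (2 - \<alpha>)) *
         ((ln (tg a0 T N (real k + \<sigma>) / tg a0 T N (real i - 1))) powr (2 - \<alpha>)
        - (ln (tg a0 T N (real k + \<sigma>) / tg a0 T N (real i))) powr (2 - \<alpha>))
     - ln (tg a0 T N (real i) / tg a0 T N (real i - 1)) *
         ((ln (tg a0 T N (real k + \<sigma>) / tg a0 T N (real i))) powr (1 - \<alpha>)
        + (ln (tg a0 T N (real k + \<sigma>) / tg a0 T N (real i - 1))) powr (1 - \<alpha>)))"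

text \<open>L2-1_sigma coefficients c_{i,k}, meaningful for 1 <= i <= k+1.\<close>
definition ccoef :: "real \<Rightarrow> real \<Rightarrow> nat \<Rightarrow> real \<Rightarrow> real \<Rightarrow> nat \<Rightarrow> nat \<Rightarrow> real" where
  "ccoef a0 T N \<alpha> \<sigma> i k =
    (if k = 0 then
       (ln (tg a0 T N \<sigma> / tg a0 T N 0)) powr (1 - \<alpha>)
         / (Gamma (2 - \<alpha>) * ln (tg a0 T N 1 / tg a0 T N 0))
     else if i = 1 then
       (acoef a0 T N \<alpha> \<sigma> 1 k - bcoef a0 T N \<alpha> \<sigma> 1 k)
         / (Gamma (2 - \<alpha>) * ln (tg a0 T N 1 / tg a0 T N 0))
     else if i = k + 1 then
       (bcoef a0 T N \<alpha> \<sigma> k k + (ln (tg a0 T N (real k + \<sigma>) / tg a0 T N (real k))) powr (1 - \<alpha>))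
         / (Gamma (2 - \<alpha>) * ln (tg a0 T N (real k + 1) / tg a0 T N (real k)))
     else
       (acoef a0 T N \<alpha> \<sigma> i k + bcoef a0 T N \<alpha> \<sigma> (i - 1) k - bcoef a0 T N \<alpha> \<sigma> i k)
         / (Gamma (2 - \<alpha>) * ln (tg a0 T N (real i) / tg a0 T N (real i - 1))))"

text \<open>1D discrete inner product on x_j = a + j h, h = (b-a)/M; grid function = nat => real (indices 0..M).\<close>
definition ip1 :: "real \<Rightarrow> real \<Rightarrow> nat \<Rightarrow> (nat \<Rightarrow> real) \<Rightarrow> (nat \<Rightarrow> real) \<Rightarrow> real" where
  "ip1 a b M w v = ((b - a) / real M) * (\<Sum>j = 1..M - 1. w j * v j)"

definition nrm1sq :: "real \<Rightarrow> real \<Rightarrow> nat \<Rightarrow> (nat \<Rightarrow> real) \<Rightarrow> real" where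
  "nrm1sq a b M w = ip1 a b M w w"

text \<open>2D discrete inner product on x_j = -L + j h, y_k = -L + k h, h = 2L/M.\<close>
definition ip2 :: "real \<Rightarrow> nat \<Rightarrow> (nat \<Rightarrow> nat \<Rightarrow> real) \<Rightarrow> (nat \<Rightarrow> nat \<Rightarrow> real) \<Rightarrow> real" where
  "ip2 L M w v = (2 * L / real M)^2 * (\<Sum>j = 1..M - 1. \<Sum>l = 1..M - 1. w j l * v j l)"

definition nrm2sq :: "real \<Rightarrow> nat \<Rightarrow> (nat \<Rightarrow> nat \<Rightarrow> real) \<Rightarrow> real" where
  "nrm2sq L M w = ip2 L M w w"

definition in_S0 :: "nat \<Rightarrow> (nat \<Rightarrow> nat \<Rightarrow> real) \<Rightarrow> bool" where
  "in_S0 M w \<longleftrightarrow> (\<forall>j l. j \<le> M \<and> l \<le> M \<and> (j = 0 \<or> j = M \<or> l = 0 \<or> l = M) \<longrightarrow> w j l = 0)"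

end

theory Submission
  imports Defs "HOL-Real_Asymp.Real_Asymp"
begin

(* Pointwise in space the inequality is a scalar one. With y = sigma x_(k+1) + (1 - sigma) x_k and
   E_j = (y - x_j)^2, the difference of its two sides is 1/2 Sum_i c_i (E_(i-1) - E_i); since
   E_k = sigma^2 e^2 and E_(k+1) = (1 - sigma)^2 e^2 for e = x_(k+1) - x_k, summation by parts writes
   it as a combination of the E_j with nonnegative weights as soon as 0 <= c_1 <= ... <= c_k and
   sigma^2 c_k <= (2 sigma - 1) c_(k+1).

   The coefficients c_(i,k) depend on the grid only through the logarithmic distances ln (t_x / t_y)
   and are homogeneous of degree -alpha in them. Multiplied by a0 / tau these distances tend to
   x - y as tau -> 0, so up to a positive factor the c_(i,k) tend to the coefficients of the uniform
   grid. For those, concavity of r^(1 - alpha) and convexity of its derivative give the three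
   conditions with strict inequalities when sigma = 1 - alpha / 2; hence they hold for all small
   tau. *)

section \<open>Energy inequality for monotone weights\<close>

definition admissible_weights :: "real \<Rightarrow> nat \<Rightarrow> (nat \<Rightarrow> real) \<Rightarrow> bool" where
  "admissible_weights \<sigma> k c \<longleftrightarrow> 0 \<le> c 1 \<and> (\<forall>i. 1 \<le> i \<and> i < k \<longrightarrow> c i \<le> c (i + 1)) \<and>
     (if k = 0 then 0 else \<sigma>\<^sup>2 * c k) \<le> (2 * \<sigma> - 1) * c (k + 1)"

lemma sum_weighted_differences_by_parts:
  fixes c E :: "nat \<Rightarrow> real"
  shows "(\<Sum>i = 1..n + 1. c i * (E (i - 1) - E i)) =
     c 1 * E 0 + (\<Sum>i = 1..n. (c (i + 1) - c i) * E i) - c (n + 1) * E (n + 1)"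
  by (induction n) (simp_all add: algebra_simps)

lemma admissible_weights_energy_ineq:
  fixes c x :: "nat \<Rightarrow> real"
  assumes "admissible_weights \<sigma> k c"
  shows "1 / 2 * (\<Sum>i = 1..k + 1. c i * (x i * x i - x (i - 1) * x (i - 1)))
     \<le> (\<Sum>i = 1..k + 1. c i * ((x i - x (i - 1)) * (\<sigma> * x (k + 1) + (1 - \<sigma>) * x k)))"
proof -
  define y where "y = \<sigma> * x (k + 1) + (1 - \<sigma>) * x k"
  define E where "E j = (y - x j)\<^sup>2" for j
  define e where "e = x (k + 1) - x k"
  have c1: "0 \<le> c 1" and mono: "\<And>i. 1 \<le> i \<Longrightarrow> i < k \<Longrightarrow> c i \<le> c (i + 1)"
    and last: "(if k = 0 then 0 else \<sigma>\<^sup>2 * c k) \<le> (2 * \<sigma> - 1) * c (k + 1)"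
    using assms by (auto simp: admissible_weights_def)
  have E_nonneg: "0 \<le> E j" for j
    by (simp add: E_def)
  have energy_identity: "(\<Sum>i = 1..k + 1. c i * ((x i - x (i - 1)) * y))
      - 1 / 2 * (\<Sum>i = 1..k + 1. c i * (x i * x i - x (i - 1) * x (i - 1)))
     = 1 / 2 * (\<Sum>i = 1..k + 1. c i * (E (i - 1) - E i))"
    by (simp add: sum_subtractf[symmetric] sum_distrib_left E_def power2_eq_square algebra_simps)
  have Ek: "E k = \<sigma>\<^sup>2 * e\<^sup>2" and Ek1: "E (k + 1) = (1 - \<sigma>)\<^sup>2 * e\<^sup>2"
    by (simp_all add: E_def y_def e_def power2_eq_square algebra_simps)
  have "0 \<le> (\<Sum>i = 1..k + 1. c i * (E (i - 1) - E i))"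
  proof (cases k)
    case 0
    have "0 \<le> (2 * \<sigma> - 1) * c (k + 1) * e\<^sup>2"
      using last 0 by simp
    also have "\<dots> = c (k + 1) * (E k - E (k + 1))"
      unfolding Ek Ek1 by (simp add: power2_eq_square algebra_simps)
    also have "\<dots> = (\<Sum>i = 1..k + 1. c i * (E (i - 1) - E i))"
      using 0 by simp
    finally show ?thesis .
  next
    case (Suc m)
    have "(\<Sum>i = 1..k + 1. c i * (E (i - 1) - E i))
        = c 1 * E 0 + (\<Sum>i = 1..m. (c (i + 1) - c i) * E i)
          + ((c (k + 1) - c k) * E k - c (k + 1) * E (k + 1))"
      unfolding sum_weighted_differences_by_parts by (simp add: Suc)
    also have "(c (k + 1) - c k) * E k - c (k + 1) * E (k + 1)
        = ((2 * \<sigma> - 1) * c (k + 1) - \<sigma>\<^sup>2 * c k) * e\<^sup>2"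
      unfolding Ek Ek1 by (simp add: power2_eq_square algebra_simps)
    finally have "(\<Sum>i = 1..k + 1. c i * (E (i - 1) - E i))
        = c 1 * E 0 + (\<Sum>i = 1..m. (c (i + 1) - c i) * E i)
          + ((2 * \<sigma> - 1) * c (k + 1) - \<sigma>\<^sup>2 * c k) * e\<^sup>2" .
    moreover have "0 \<le> (\<Sum>i = 1..m. (c (i + 1) - c i) * E i)"
      by (rule sum_nonneg) (use mono E_nonneg Suc in auto)
    ultimately show ?thesis
      using c1 E_nonneg[of 0] last Suc by simp
  qed
  with energy_identity show ?thesis
    unfolding y_def by linarith
qed

lemma admissible_weights_energy_ineq_sum:
  fixes x :: "nat \<Rightarrow> 'a \<Rightarrow> real"
  assumes "admissible_weights \<sigma> k c" and "0 \<le> h"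
  shows "1 / 2 * (\<Sum>i = 1..k + 1. c i *
            (h * (\<Sum>p\<in>P. x i p * x i p) - h * (\<Sum>p\<in>P. x (i - 1) p * x (i - 1) p)))
     \<le> (\<Sum>i = 1..k + 1. c i *
            (h * (\<Sum>p\<in>P. (x i p - x (i - 1) p) * (\<sigma> * x (k + 1) p + (1 - \<sigma>) * x k p))))"
proof -
  have "(\<Sum>p\<in>P. 1 / 2 * (\<Sum>i = 1..k + 1. c i * (x i p * x i p - x (i - 1) p * x (i - 1) p)))
     \<le> (\<Sum>p\<in>P. \<Sum>i = 1..k + 1. c i * ((x i p - x (i - 1) p) * (\<sigma> * x (k + 1) p + (1 - \<sigma>) * x k p)))"
    by (intro sum_mono admissible_weights_energy_ineq assms(1))
  then have "h * (\<Sum>p\<in>P. 1 / 2 * (\<Sum>i = 1..k + 1. c i * (x i p * x i p - x (i - 1) p * x (i - 1) p)))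
     \<le> h * (\<Sum>p\<in>P. \<Sum>i = 1..k + 1.
              c i * ((x i p - x (i - 1) p) * (\<sigma> * x (k + 1) p + (1 - \<sigma>) * x k p)))"
    using assms(2) by (rule mult_left_mono)
  then show ?thesis
    by (simp add: sum_distrib_left sum_subtractf algebra_simps sum.swap[of _ P])
qed

lemma ip1_energy_ineq:
  assumes "admissible_weights \<sigma> k c" and "a \<le> b"
  shows "1 / 2 * (\<Sum>i = 1..k + 1. c i * (nrm1sq a b M (v i) - nrm1sq a b M (v (i - 1))))
     \<le> (\<Sum>i = 1..k + 1. c i *
            ip1 a b M (\<lambda>j. v i j - v (i - 1) j) (\<lambda>j. \<sigma> * v (k + 1) j + (1 - \<sigma>) * v k j))"
  using admissible_weights_energy_ineq_sum[OF assms(1),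
      where h = "(b - a) / real M" and P = "{1..M - 1}" and x = v] assms(2)
  unfolding nrm1sq_def ip1_def by simp

lemma ip2_energy_ineq:
  assumes "admissible_weights \<sigma> k c"
  shows "1 / 2 * (\<Sum>i = 1..k + 1. c i * (nrm2sq L M (w i) - nrm2sq L M (w (i - 1))))
     \<le> (\<Sum>i = 1..k + 1. c i *
            ip2 L M (\<lambda>j l. w i j l - w (i - 1) j l) (\<lambda>j l. \<sigma> * w (k + 1) j l + (1 - \<sigma>) * w k j l))"
  using admissible_weights_energy_ineq_sum[OF assms(1),
      where h = "(2 * L / real M)\<^sup>2" and P = "{1..M - 1} \<times> {1..M - 1}"
        and x = "\<lambda>i p. w i (fst p) (snd p)"]
  unfolding nrm2sq_def ip2_def by (simp add: sum.cartesian_product split_beta)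

lemma admissible_weights_cmult_iff:
  assumes "0 < q"
  shows "admissible_weights \<sigma> k (\<lambda>i. q * c i) \<longleftrightarrow> admissible_weights \<sigma> k c"
  using assms unfolding admissible_weights_def
  by (simp add: zero_le_mult_iff mult.left_commute[of _ q] mult_le_cancel_left_pos)

lemma eventually_admissible_weights:
  assumes lim: "\<And>i. 1 \<le> i \<Longrightarrow> i \<le> k + 1 \<Longrightarrow> ((\<lambda>n. c n i) \<longlongrightarrow> c0 i) F"
    and first: "0 < c0 1"
    and mono: "\<And>i. 1 \<le> i \<Longrightarrow> i < k \<Longrightarrow> c0 i < c0 (i + 1)"
    and last: "0 < k \<Longrightarrow> \<sigma>\<^sup>2 * c0 k < (2 * \<sigma> - 1) * c0 (k + 1)"
    and "1 / 2 \<le> \<sigma>"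
  shows "eventually (\<lambda>n. admissible_weights \<sigma> k (c n)) F"
proof -
  have "eventually (\<lambda>n. 0 < c n 1) F"
    using order_tendstoD(1)[OF lim first] by simp
  moreover have "eventually (\<lambda>n. \<forall>i\<in>{1..<k}. c n i < c n (i + 1)) F"
  proof (rule eventually_ball_finite[OF finite_atLeastLessThan], intro ballI)
    fix i assume "i \<in> {1..<k}"
    then have "((\<lambda>n. c n (i + 1) - c n i) \<longlongrightarrow> c0 (i + 1) - c0 i) F" and "0 < c0 (i + 1) - c0 i"
      using mono by (auto intro!: tendsto_intros lim)
    then show "eventually (\<lambda>n. c n i < c n (i + 1)) F"
      using order_tendstoD(1) by fastforce
  qed
  moreover have "eventually (\<lambda>n. 0 < k \<longrightarrow> \<sigma>\<^sup>2 * c n k < (2 * \<sigma> - 1) * c n (k + 1)) F"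
  proof (cases "k = 0")
    case False
    then have "((\<lambda>n. (2 * \<sigma> - 1) * c n (k + 1) - \<sigma>\<^sup>2 * c n k)
        \<longlongrightarrow> (2 * \<sigma> - 1) * c0 (k + 1) - \<sigma>\<^sup>2 * c0 k) F"
      by (auto intro!: tendsto_intros lim)
    then have "eventually (\<lambda>n. 0 < (2 * \<sigma> - 1) * c n (k + 1) - \<sigma>\<^sup>2 * c n k) F"
      by (rule order_tendstoD(1)) (use last False in simp)
    then show ?thesis
      by eventually_elim simp
  qed simp
  ultimately show ?thesis
  proof eventually_elim
    case (elim n)
    then show ?case
      using \<open>1 / 2 \<le> \<sigma>\<close> by (auto simp: admissible_weights_def less_imp_le)
  qed
qed

section \<open>L2-1\<sigma> coefficients for a general distance function\<close>

(* L x y plays the role of ln (t_x / t_y), see ccoef_eq_ccoef_gen; L x y = x - y gives the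
   coefficients of the uniform grid. *)
definition acoef_gen :: "(real \<Rightarrow> real \<Rightarrow> real) \<Rightarrow> real \<Rightarrow> real \<Rightarrow> nat \<Rightarrow> nat \<Rightarrow> real" where
  "acoef_gen L \<alpha> \<sigma> i k =
     L (real k + \<sigma>) (real i - 1) powr (1 - \<alpha>) - L (real k + \<sigma>) (real i) powr (1 - \<alpha>)"

definition bcoef_gen :: "(real \<Rightarrow> real \<Rightarrow> real) \<Rightarrow> real \<Rightarrow> real \<Rightarrow> nat \<Rightarrow> nat \<Rightarrow> real" where
  "bcoef_gen L \<alpha> \<sigma> i k = (1 / L (real i + 1) (real i - 1)) *
     ((2 / (2 - \<alpha>)) *
        (L (real k + \<sigma>) (real i - 1) powr (2 - \<alpha>) - L (real k + \<sigma>) (real i) powr (2 - \<alpha>))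
      - L (real i) (real i - 1) *
        (L (real k + \<sigma>) (real i) powr (1 - \<alpha>) + L (real k + \<sigma>) (real i - 1) powr (1 - \<alpha>)))"

definition ccoef_gen :: "(real \<Rightarrow> real \<Rightarrow> real) \<Rightarrow> real \<Rightarrow> real \<Rightarrow> nat \<Rightarrow> nat \<Rightarrow> real" where
  "ccoef_gen L \<alpha> \<sigma> i k =
    (if k = 0 then L \<sigma> 0 powr (1 - \<alpha>) / (Gamma (2 - \<alpha>) * L 1 0)
     else if i = 1 then (acoef_gen L \<alpha> \<sigma> 1 k - bcoef_gen L \<alpha> \<sigma> 1 k) / (Gamma (2 - \<alpha>) * L 1 0)
     else if i = k + 1 then (bcoef_gen L \<alpha> \<sigma> k k + L (real k + \<sigma>) (real k) powr (1 - \<alpha>))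
         / (Gamma (2 - \<alpha>) * L (real k + 1) (real k))
     else (acoef_gen L \<alpha> \<sigma> i k + bcoef_gen L \<alpha> \<sigma> (i - 1) k - bcoef_gen L \<alpha> \<sigma> i k)
         / (Gamma (2 - \<alpha>) * L (real i) (real i - 1)))"

lemma ccoef_eq_ccoef_gen:
  "ccoef a0 T N \<alpha> \<sigma> i k = ccoef_gen (\<lambda>x y. ln (tg a0 T N x / tg a0 T N y)) \<alpha> \<sigma> i k"
  unfolding ccoef_def ccoef_gen_def acoef_def bcoef_def acoef_gen_def bcoef_gen_def by simp

lemma acoef_gen_scale:
  "acoef_gen (\<lambda>x y. q * L x y) \<alpha> \<sigma> i k = q powr (1 - \<alpha>) * acoef_gen L \<alpha> \<sigma> i k"
  unfolding acoef_gen_def by (simp add: powr_mult algebra_simps)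

lemma bcoef_gen_scale:
  assumes "0 < q"
  shows "bcoef_gen (\<lambda>x y. q * L x y) \<alpha> \<sigma> i k = q powr (1 - \<alpha>) * bcoef_gen L \<alpha> \<sigma> i k"
proof -
  have "q powr (2 - \<alpha>) = q * q powr (1 - \<alpha>)"
    using powr_add[of q 1 "1 - \<alpha>"] assms by simp
  then show ?thesis
    unfolding bcoef_gen_def using assms by (simp add: powr_mult field_split_simps)
qed

(* No assumption on L is needed: a vanishing denominator makes both sides 0. *)
lemma ccoef_gen_scale:
  assumes "0 < q"
  shows "ccoef_gen (\<lambda>x y. q * L x y) \<alpha> \<sigma> i k = q powr (- \<alpha>) * ccoef_gen L \<alpha> \<sigma> i k"
proof -
  have "q powr (1 - \<alpha>) = q * q powr (- \<alpha>)"
    using powr_add[of q 1 "- \<alpha>"] assms by simp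
  then show ?thesis
    unfolding ccoef_gen_def acoef_gen_scale bcoef_gen_scale[OF assms] using assms
    by (auto simp: powr_mult field_split_simps)
qed

lemma acoef_gen_tendsto:
  assumes lim: "\<And>x y. ((\<lambda>n. L n x y) \<longlongrightarrow> x - y) F" and "0 < \<sigma>" and "i \<le> k"
  shows "((\<lambda>n. acoef_gen (L n) \<alpha> \<sigma> i k) \<longlongrightarrow> acoef_gen (\<lambda>x y. x - y) \<alpha> \<sigma> i k) F"
  unfolding acoef_gen_def using assms(2,3) by (intro tendsto_intros lim) auto

lemma bcoef_gen_tendsto:
  assumes lim: "\<And>x y. ((\<lambda>n. L n x y) \<longlongrightarrow> x - y) F" and "0 < \<sigma>" and "i \<le> k"
  shows "((\<lambda>n. bcoef_gen (L n) \<alpha> \<sigma> i k) \<longlongrightarrow> bcoef_gen (\<lambda>x y. x - y) \<alpha> \<sigma> i k) F"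
  unfolding bcoef_gen_def using assms(2,3) by (intro tendsto_intros lim) auto

lemma ccoef_gen_tendsto:
  assumes lim: "\<And>x y. ((\<lambda>n. L n x y) \<longlongrightarrow> x - y) F"
    and "0 < \<sigma>" and "\<alpha> < 2" and "1 \<le> i" and "i \<le> k + 1"
  shows "((\<lambda>n. ccoef_gen (L n) \<alpha> \<sigma> i k) \<longlongrightarrow> ccoef_gen (\<lambda>x y. x - y) \<alpha> \<sigma> i k) F"
proof -
  have "Gamma (2 - \<alpha>) \<noteq> 0"
    using assms(3) by (simp add: Gamma_real_pos less_imp_neq[symmetric])
  note intros = tendsto_intros lim acoef_gen_tendsto[OF lim] bcoef_gen_tendsto[OF lim]
  consider "k = 0" | "k \<noteq> 0" "i = 1" | "k \<noteq> 0" "i \<noteq> 1" "i = k + 1" | "k \<noteq> 0" "i \<noteq> 1" "i \<noteq> k + 1"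
    by blast
  then show ?thesis
  proof cases
    case 1
    show ?thesis
      unfolding ccoef_gen_def if_P[OF 1] using \<open>Gamma (2 - \<alpha>) \<noteq> 0\<close> assms(2)
      by (intro intros) auto
  next
    case 2
    show ?thesis
      unfolding ccoef_gen_def if_not_P[OF 2(1)] if_P[OF 2(2)] using \<open>Gamma (2 - \<alpha>) \<noteq> 0\<close> assms(2) 2
      by (intro intros) auto
  next
    case 3
    show ?thesis
      unfolding ccoef_gen_def if_not_P[OF 3(1)] if_not_P[OF 3(2)] if_P[OF 3(3)]
      using \<open>Gamma (2 - \<alpha>) \<noteq> 0\<close> assms(2) 3
      by (intro intros) auto
  next
    case 4
    show ?thesis
      unfolding ccoef_gen_def if_not_P[OF 4(1)] if_not_P[OF 4(2)] if_not_P[OF 4(3)]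
      using \<open>Gamma (2 - \<alpha>) \<noteq> 0\<close> assms(2,4,5) 4
      by (intro intros) auto
  qed
qed

lemma tendsto_scaled_ln_grid_ratio:
  assumes "0 < a0" and "a0 < T"
  shows "((\<lambda>N. a0 * real N / (T - a0) * ln (tg a0 T N x / tg a0 T N y)) \<longlongrightarrow> x - y) at_top"
  using assms unfolding tg_def by (real_asymp simp: field_simps)

section \<open>The coefficients of the uniform grid\<close>

lemma trapezoid_le_increment:
  fixes G g g' :: "real \<Rightarrow> real"
  assumes "a \<le> b"
    and G: "\<And>x. a \<le> x \<Longrightarrow> x \<le> b \<Longrightarrow> (G has_real_derivative g x) (at x)"
    and g: "\<And>x. a \<le> x \<Longrightarrow> x \<le> b \<Longrightarrow> (g has_real_derivative g' x) (at x)"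
    and antimono: "\<And>x y. a \<le> x \<Longrightarrow> x \<le> y \<Longrightarrow> y \<le> b \<Longrightarrow> g' y \<le> g' x"
  shows "(b - a) * (g a + g b) / 2 \<le> G b - G a"
proof -
  define \<phi> where "\<phi> t = G t - G a - (t - a) * (g a + g t) / 2" for t
  have "\<phi> a \<le> \<phi> b"
  proof (rule DERIV_nonneg_imp_nondecreasing[OF assms(1)])
    fix t assume t: "a \<le> t" "t \<le> b"
    have "(\<phi> has_real_derivative (g t - g a - (t - a) * g' t) / 2) (at t)"
      unfolding \<phi>_def[abs_def]
      by (rule derivative_eq_intros G[OF t] g[OF t] refl | simp add: field_simps)+
    moreover have "(t - a) * g' t \<le> g t - g a"
    proof (cases "a = t")
      case False
      then obtain \<xi> where "a < \<xi>" "\<xi> < t" "g t - g a = (t - a) * g' \<xi>"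
        using MVT2[of a t g g'] g t by fastforce
      then show ?thesis
        using antimono[of \<xi> t] t by (simp add: mult_left_mono)
    qed simp
    ultimately show "\<exists>y. (\<phi> has_real_derivative y) (at t) \<and> 0 \<le> y"
      by fastforce
  qed
  then show ?thesis
    by (simp add: \<phi>_def)
qed

lemma MVT_strict_antimono_deriv:
  fixes g g' :: "real \<Rightarrow> real"
  assumes "a < b"
    and "\<And>x. a \<le> x \<Longrightarrow> x \<le> b \<Longrightarrow> (g has_real_derivative g' x) (at x)"
    and "\<And>x y. a \<le> x \<Longrightarrow> x < y \<Longrightarrow> y \<le> b \<Longrightarrow> g' y < g' x"
  shows "(b - a) * g' b < g b - g a" and "g b - g a < (b - a) * g' a"
proof -
  obtain \<xi> where \<xi>: "a < \<xi>" "\<xi> < b" "g b - g a = (b - a) * g' \<xi>"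
    using MVT2[OF assms(1,2)] by blast
  have "g' b < g' \<xi>" and "g' \<xi> < g' a"
    using assms(3) \<xi> by auto
  then show "(b - a) * g' b < g b - g a" and "g b - g a < (b - a) * g' a"
    using \<xi>(3) assms(1) by simp_all
qed

lemma MVT_strict_mono_deriv:
  fixes g g' :: "real \<Rightarrow> real"
  assumes "a < b"
    and "\<And>x. a \<le> x \<Longrightarrow> x \<le> b \<Longrightarrow> (g has_real_derivative g' x) (at x)"
    and "\<And>x y. a \<le> x \<Longrightarrow> x < y \<Longrightarrow> y \<le> b \<Longrightarrow> g' x < g' y"
  shows "(b - a) * g' a < g b - g a" and "g b - g a < (b - a) * g' b"
proof -
  obtain \<xi> where \<xi>: "a < \<xi>" "\<xi> < b" "g b - g a = (b - a) * g' \<xi>"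
    using MVT2[OF assms(1,2)] by blast
  have "g' a < g' \<xi>" and "g' \<xi> < g' b"
    using assms(3) \<xi> by auto
  then show "(b - a) * g' a < g b - g a" and "g b - g a < (b - a) * g' b"
    using \<xi>(3) assms(1) by simp_all
qed

definition frac_pow :: "real \<Rightarrow> real \<Rightarrow> real" where
  "frac_pow \<alpha> r = r powr (1 - \<alpha>)"

definition frac_pow' :: "real \<Rightarrow> real \<Rightarrow> real" where
  "frac_pow' \<alpha> r = (1 - \<alpha>) * r powr (- \<alpha>)"

definition frac_pow'' :: "real \<Rightarrow> real \<Rightarrow> real" where
  "frac_pow'' \<alpha> r = (1 - \<alpha>) * (- \<alpha>) * r powr (- \<alpha> - 1)"

definition frac_pow_int :: "real \<Rightarrow> real \<Rightarrow> real" where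
  "frac_pow_int \<alpha> r = r powr (2 - \<alpha>) / (2 - \<alpha>)"

lemma has_real_derivative_frac_pow [derivative_intros]:
  assumes "(g has_real_derivative g') (at x within s)" and "0 < g x"
  shows "((\<lambda>x. frac_pow \<alpha> (g x)) has_real_derivative frac_pow' \<alpha> (g x) * g') (at x within s)"
  unfolding frac_pow_def frac_pow'_def using assms
  by (auto intro!: derivative_eq_intros)

lemma has_real_derivative_frac_pow' [derivative_intros]:
  assumes "(g has_real_derivative g') (at x within s)" and "0 < g x"
  shows "((\<lambda>x. frac_pow' \<alpha> (g x)) has_real_derivative frac_pow'' \<alpha> (g x) * g') (at x within s)"
  unfolding frac_pow'_def frac_pow''_def using assms
  by (auto intro!: derivative_eq_intros)

lemma has_real_derivative_frac_pow_int [derivative_intros]: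
  assumes "(g has_real_derivative g') (at x within s)" and "0 < g x" and "\<alpha> < 2"
  shows "((\<lambda>x. frac_pow_int \<alpha> (g x)) has_real_derivative frac_pow \<alpha> (g x) * g') (at x within s)"
  unfolding frac_pow_int_def frac_pow_def using assms
  by (auto intro!: derivative_eq_intros simp: diff_diff_eq2)

(* frac_pow_int is an antiderivative of frac_pow, so bcoef_unif r is the error of the trapezoidal
   rule for frac_pow on [r, r + 1]. *)
definition bcoef_unif :: "real \<Rightarrow> real \<Rightarrow> real" where
  "bcoef_unif \<alpha> r =
     frac_pow_int \<alpha> (r + 1) - frac_pow_int \<alpha> r - (frac_pow \<alpha> r + frac_pow \<alpha> (r + 1)) / 2"

definition ccoef_mid_unif :: "real \<Rightarrow> real \<Rightarrow> real" where
  "ccoef_mid_unif \<alpha> r = frac_pow \<alpha> (r + 1) - frac_pow \<alpha> r + bcoef_unif \<alpha> (r + 1) - bcoef_unif \<alpha> r"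

abbreviation ccoef_unif :: "real \<Rightarrow> real \<Rightarrow> nat \<Rightarrow> nat \<Rightarrow> real" where
  "ccoef_unif \<alpha> \<sigma> i k \<equiv> ccoef_gen (\<lambda>x y. x - y) \<alpha> \<sigma> i k"

lemma acoef_gen_unif:
  "acoef_gen (\<lambda>x y. x - y) \<alpha> \<sigma> i k =
     frac_pow \<alpha> (real k + \<sigma> - real i + 1) - frac_pow \<alpha> (real k + \<sigma> - real i)"
  unfolding acoef_gen_def frac_pow_def by (simp add: algebra_simps)

lemma bcoef_gen_unif: "bcoef_gen (\<lambda>x y. x - y) \<alpha> \<sigma> i k = bcoef_unif \<alpha> (real k + \<sigma> - real i)"
  unfolding bcoef_gen_def bcoef_unif_def frac_pow_def frac_pow_int_def by (simp add: algebra_simps)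

lemma ccoef_unif_first:
  "0 < k \<Longrightarrow> ccoef_unif \<alpha> \<sigma> 1 k =
     (frac_pow \<alpha> (real k + \<sigma>) - frac_pow \<alpha> (real k + \<sigma> - 1) - bcoef_unif \<alpha> (real k + \<sigma> - 1))
       / Gamma (2 - \<alpha>)"
  unfolding ccoef_gen_def acoef_gen_unif bcoef_gen_unif by simp

lemma ccoef_unif_mid:
  "2 \<le> i \<Longrightarrow> i \<le> k \<Longrightarrow> ccoef_unif \<alpha> \<sigma> i k = ccoef_mid_unif \<alpha> (real k + \<sigma> - real i) / Gamma (2 - \<alpha>)"
  unfolding ccoef_gen_def acoef_gen_unif bcoef_gen_unif ccoef_mid_unif_def
  by (simp add: of_nat_diff algebra_simps)

lemma ccoef_unif_last:
  "0 < k \<Longrightarrow> ccoef_unif \<alpha> \<sigma> (k + 1) k = (bcoef_unif \<alpha> \<sigma> + frac_pow \<alpha> \<sigma>) / Gamma (2 - \<alpha>)"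
  unfolding ccoef_gen_def bcoef_gen_unif frac_pow_def by simp

context
  fixes \<alpha> :: real
  assumes \<alpha>_pos: "0 < \<alpha>" and \<alpha>_less_1: "\<alpha> < 1"
begin

lemma frac_pow_strict_mono: "0 \<le> x \<Longrightarrow> x < y \<Longrightarrow> frac_pow \<alpha> x < frac_pow \<alpha> y"
  unfolding frac_pow_def using \<alpha>_less_1 by (simp add: powr_less_mono2)

lemma frac_pow'_strict_antimono: "0 < x \<Longrightarrow> x < y \<Longrightarrow> frac_pow' \<alpha> y < frac_pow' \<alpha> x"
  unfolding frac_pow'_def using \<alpha>_pos \<alpha>_less_1 by (simp add: powr_less_mono2_neg)

lemma frac_pow''_strict_mono: "0 < x \<Longrightarrow> x < y \<Longrightarrow> frac_pow'' \<alpha> x < frac_pow'' \<alpha> y"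
  unfolding frac_pow''_def using \<alpha>_pos \<alpha>_less_1
  by (simp add: powr_less_mono2_neg mult_pos_neg mult_less_cancel_left_neg)

lemma frac_pow_increment_bounds:
  assumes "0 < r" and "0 < t"
  shows "t * frac_pow' \<alpha> (r + t) < frac_pow \<alpha> (r + t) - frac_pow \<alpha> r"
    and "frac_pow \<alpha> (r + t) - frac_pow \<alpha> r < t * frac_pow' \<alpha> r"
proof -
  have "(frac_pow \<alpha> has_real_derivative frac_pow' \<alpha> x) (at x)" if "r \<le> x" for x
    using that assms by (auto intro!: derivative_eq_intros)
  moreover have "frac_pow' \<alpha> y < frac_pow' \<alpha> x" if "r \<le> x" "x < y" for x y
    using that assms frac_pow'_strict_antimono by simp
  ultimately show "t * frac_pow' \<alpha> (r + t) < frac_pow \<alpha> (r + t) - frac_pow \<alpha> r"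
    and "frac_pow \<alpha> (r + t) - frac_pow \<alpha> r < t * frac_pow' \<alpha> r"
    using MVT_strict_antimono_deriv[of r "r + t" "frac_pow \<alpha>" "frac_pow' \<alpha>"] assms by auto
qed

lemma frac_pow'_increment_bounds:
  assumes "0 < r" and "0 < t"
  shows "t * frac_pow'' \<alpha> r < frac_pow' \<alpha> (r + t) - frac_pow' \<alpha> r"
    and "frac_pow' \<alpha> (r + t) - frac_pow' \<alpha> r < t * frac_pow'' \<alpha> (r + t)"
proof -
  have "(frac_pow' \<alpha> has_real_derivative frac_pow'' \<alpha> x) (at x)" if "r \<le> x" for x
    using that assms by (auto intro!: derivative_eq_intros)
  moreover have "frac_pow'' \<alpha> x < frac_pow'' \<alpha> y" if "r \<le> x" "x < y" for x y
    using that assms frac_pow''_strict_mono by simp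
  ultimately show "t * frac_pow'' \<alpha> r < frac_pow' \<alpha> (r + t) - frac_pow' \<alpha> r"
    and "frac_pow' \<alpha> (r + t) - frac_pow' \<alpha> r < t * frac_pow'' \<alpha> (r + t)"
    using MVT_strict_mono_deriv[of r "r + t" "frac_pow' \<alpha>" "frac_pow'' \<alpha>"] assms by auto
qed

lemma frac_pow_int_increment_less:
  assumes "0 < r"
  shows "frac_pow_int \<alpha> (r + 1) - frac_pow_int \<alpha> r < frac_pow \<alpha> (r + 1)"
proof -
  have "(frac_pow_int \<alpha> has_real_derivative frac_pow \<alpha> x) (at x)" if "r \<le> x" for x
    using that assms \<alpha>_less_1 by (auto intro!: derivative_eq_intros)
  moreover have "frac_pow \<alpha> x < frac_pow \<alpha> y" if "r \<le> x" "x < y" for x y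
    using that assms frac_pow_strict_mono by simp
  ultimately show ?thesis
    using MVT_strict_mono_deriv(2)[of r "r + 1" "frac_pow_int \<alpha>" "frac_pow \<alpha>"] by auto
qed

lemma Gamma_two_minus_pos: "0 < Gamma (2 - \<alpha>)"
  using \<alpha>_less_1 by (simp add: Gamma_real_pos)

lemma bcoef_unif_nonneg:
  assumes "0 < r"
  shows "0 \<le> bcoef_unif \<alpha> r"
proof -
  have "(r + 1 - r) * (frac_pow \<alpha> r + frac_pow \<alpha> (r + 1)) / 2
      \<le> frac_pow_int \<alpha> (r + 1) - frac_pow_int \<alpha> r"
  proof (rule trapezoid_le_increment)
    fix x y assume "r \<le> x" "x \<le> y"
    then show "frac_pow' \<alpha> y \<le> frac_pow' \<alpha> x"
      using assms frac_pow'_strict_antimono[of x y] by (cases "x = y") auto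
  qed (use assms \<alpha>_less_1 in \<open>auto intro!: derivative_eq_intros\<close>)
  then show ?thesis
    by (simp add: bcoef_unif_def)
qed

lemma has_real_derivative_bcoef_unif [derivative_intros]:
  assumes "(g has_real_derivative g') (at x within s)" and "0 < g x"
  shows "((\<lambda>x. bcoef_unif \<alpha> (g x)) has_real_derivative
     (frac_pow \<alpha> (g x + 1) - frac_pow \<alpha> (g x)
      - (frac_pow' \<alpha> (g x) + frac_pow' \<alpha> (g x + 1)) / 2) * g')
     (at x within s)"
  unfolding bcoef_unif_def using assms \<alpha>_less_1
  by (auto intro!: derivative_eq_intros simp: field_simps)

lemma bcoef_unif_antimono:
  assumes "0 < r"
  shows "bcoef_unif \<alpha> (r + 1) \<le> bcoef_unif \<alpha> r"
proof (rule DERIV_nonpos_imp_nonincreasing[where f = "bcoef_unif \<alpha>"])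
  fix y assume y: "r \<le> y" "y \<le> r + 1"
  have "(y + 1 - y) * (- frac_pow' \<alpha> y + - frac_pow' \<alpha> (y + 1)) / 2
      \<le> - frac_pow \<alpha> (y + 1) - - frac_pow \<alpha> y"
  proof (rule trapezoid_le_increment[where g' = "\<lambda>x. - frac_pow'' \<alpha> x"])
    fix x z assume "y \<le> x" "x \<le> z"
    then show "- frac_pow'' \<alpha> z \<le> - frac_pow'' \<alpha> x"
      using assms y frac_pow''_strict_mono[of x z] by (cases "x = z") auto
  qed (use assms y in \<open>auto intro!: derivative_eq_intros\<close>)
  moreover have "(bcoef_unif \<alpha> has_real_derivative
      frac_pow \<alpha> (y + 1) - frac_pow \<alpha> y - (frac_pow' \<alpha> y + frac_pow' \<alpha> (y + 1)) / 2) (at y)"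
    using assms y by (auto intro!: derivative_eq_intros)
  ultimately show "\<exists>D. (bcoef_unif \<alpha> has_real_derivative D) (at y) \<and> D \<le> 0"
    by fastforce
qed simp

lemma ccoef_mid_unif_strict_antimono:
  assumes "0 < x" and "x < z"
  shows "ccoef_mid_unif \<alpha> z < ccoef_mid_unif \<alpha> x"
proof (rule DERIV_neg_imp_decreasing[OF assms(2)])
  fix y assume "x \<le> y" "y \<le> z"
  then have y: "0 < y"
    using assms by simp
  define D where "D = frac_pow' \<alpha> (y + 1) - frac_pow' \<alpha> y
    + (frac_pow \<alpha> (y + 2) - frac_pow \<alpha> (y + 1) - (frac_pow' \<alpha> (y + 1) + frac_pow' \<alpha> (y + 2)) / 2)
    - (frac_pow \<alpha> (y + 1) - frac_pow \<alpha> y - (frac_pow' \<alpha> y + frac_pow' \<alpha> (y + 1)) / 2)"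
  have "(ccoef_mid_unif \<alpha> has_real_derivative D) (at y)"
    unfolding ccoef_mid_unif_def[abs_def] D_def using y
    by (auto intro!: derivative_eq_intros simp: add.assoc)
  moreover have "D < 0"
  proof -
    have "frac_pow \<alpha> (y + 2) - frac_pow \<alpha> (y + 1) < frac_pow' \<alpha> (y + 1)"
      using frac_pow_increment_bounds(2)[of "y + 1" 1] y by (simp add: add.assoc)
    moreover have "frac_pow' \<alpha> (y + 1) < frac_pow \<alpha> (y + 1) - frac_pow \<alpha> y"
      using frac_pow_increment_bounds(1)[of y 1] y by simp
    moreover have "frac_pow'' \<alpha> (y + 1) < frac_pow' \<alpha> (y + 2) - frac_pow' \<alpha> (y + 1)"
      using frac_pow'_increment_bounds(1)[of "y + 1" 1] y by (simp add: add.assoc)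
    moreover have "frac_pow' \<alpha> (y + 1) - frac_pow' \<alpha> y < frac_pow'' \<alpha> (y + 1)"
      using frac_pow'_increment_bounds(2)[of y 1] y by simp
    ultimately show ?thesis
      unfolding D_def by (simp add: field_simps)
  qed
  ultimately show "\<exists>D. (ccoef_mid_unif \<alpha> has_real_derivative D) (at y) \<and> D < 0"
    by blast
qed

context
  fixes \<sigma> :: real
  assumes \<sigma>_def: "\<sigma> = 1 - \<alpha> / 2"
begin

lemma \<sigma>_bounds: "0 < \<sigma>" "\<sigma> < 1"
  using \<sigma>_def \<alpha>_pos \<alpha>_less_1 by auto

lemma ccoef_unif_first_pos: "0 < ccoef_unif \<alpha> \<sigma> 1 k"
proof (cases "k = 0")
  case True
  then show ?thesis
    unfolding ccoef_gen_def using \<sigma>_bounds Gamma_two_minus_pos by simp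
next
  case False
  define r where "r = real k + \<sigma> - 1"
  have "0 < r"
    using False \<sigma>_bounds by (simp add: r_def)
  then have "frac_pow_int \<alpha> (r + 1) - frac_pow_int \<alpha> r < frac_pow \<alpha> (r + 1)"
    and "frac_pow \<alpha> r < frac_pow \<alpha> (r + 1)"
    using frac_pow_int_increment_less frac_pow_strict_mono by simp_all
  then have "0 < frac_pow \<alpha> (r + 1) - frac_pow \<alpha> r - bcoef_unif \<alpha> r"
    unfolding bcoef_unif_def by (simp add: field_simps)
  then show ?thesis
    using ccoef_unif_first[where k = k] False Gamma_two_minus_pos by (simp add: r_def)
qed

lemma ccoef_unif_strict_mono:
  assumes "1 \<le> i" and "i < k"
  shows "ccoef_unif \<alpha> \<sigma> i k < ccoef_unif \<alpha> \<sigma> (i + 1) k"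
proof (cases "i = 1")
  case True
  define r where "r = real k + \<sigma> - 1"
  have "1 < r"
    using assms True \<sigma>_bounds by (simp add: r_def)
  have "ccoef_unif \<alpha> \<sigma> 1 k = (frac_pow \<alpha> (r + 1) - frac_pow \<alpha> r - bcoef_unif \<alpha> r) / Gamma (2 - \<alpha>)"
    using ccoef_unif_first[where k = k] assms by (simp add: r_def)
  also have "\<dots> \<le> ccoef_mid_unif \<alpha> r / Gamma (2 - \<alpha>)"
    unfolding ccoef_mid_unif_def using bcoef_unif_nonneg[of "r + 1"] \<open>1 < r\<close> Gamma_two_minus_pos
    by (intro divide_right_mono) simp_all
  also have "\<dots> < ccoef_mid_unif \<alpha> (r - 1) / Gamma (2 - \<alpha>)"
    using ccoef_mid_unif_strict_antimono[of "r - 1" r] \<open>1 < r\<close> Gamma_two_minus_pos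
    by (simp add: divide_strict_right_mono)
  also have "\<dots> = ccoef_unif \<alpha> \<sigma> 2 k"
    using ccoef_unif_mid[where i = 2 and k = k] assms True by (simp add: r_def algebra_simps)
  finally show ?thesis
    using True by (simp add: numeral_2_eq_2)
next
  case False
  have "0 < real k + \<sigma> - real (i + 1)"
    using assms \<sigma>_bounds by simp
  then have "ccoef_mid_unif \<alpha> (real k + \<sigma> - real i) < ccoef_mid_unif \<alpha> (real k + \<sigma> - real (i + 1))"
    using ccoef_mid_unif_strict_antimono by simp
  then show ?thesis
    using ccoef_unif_mid[where i = i and k = k] ccoef_unif_mid[where i = "i + 1" and k = k]
      assms False Gamma_two_minus_pos
    by (simp add: divide_strict_right_mono)
qed

lemma ccoef_unif_last_ineq:
  assumes "0 < k"
  shows "\<sigma>\<^sup>2 * ccoef_unif \<alpha> \<sigma> k k < (2 * \<sigma> - 1) * ccoef_unif \<alpha> \<sigma> (k + 1) k"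
proof -
  have "ccoef_unif \<alpha> \<sigma> k k * Gamma (2 - \<alpha>) \<le> frac_pow \<alpha> (\<sigma> + 1) - frac_pow \<alpha> \<sigma>"
  proof (cases "k = 1")
    case True
    then have "ccoef_unif \<alpha> \<sigma> k k * Gamma (2 - \<alpha>)
        = frac_pow \<alpha> (\<sigma> + 1) - frac_pow \<alpha> \<sigma> - bcoef_unif \<alpha> \<sigma>"
      using ccoef_unif_first[where k = 1] Gamma_two_minus_pos by (simp add: add.commute)
    then show ?thesis
      using bcoef_unif_nonneg[of \<sigma>] \<sigma>_bounds by simp
  next
    case False
    then have "ccoef_unif \<alpha> \<sigma> k k * Gamma (2 - \<alpha>) = ccoef_mid_unif \<alpha> \<sigma>"
      using ccoef_unif_mid[where i = k and k = k] assms Gamma_two_minus_pos by simp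
    then show ?thesis
      using bcoef_unif_antimono[of \<sigma>] \<sigma>_bounds by (simp add: ccoef_mid_unif_def)
  qed
  also have "\<dots> < frac_pow' \<alpha> \<sigma>"
    using frac_pow_increment_bounds(2)[of \<sigma> 1] \<sigma>_bounds by (simp add: add.commute)
  finally have "\<sigma>\<^sup>2 * (ccoef_unif \<alpha> \<sigma> k k * Gamma (2 - \<alpha>)) < \<sigma>\<^sup>2 * frac_pow' \<alpha> \<sigma>"
    using \<sigma>_bounds by simp
  also have "\<sigma>\<^sup>2 * frac_pow' \<alpha> \<sigma> = \<sigma> * ((1 - \<alpha>) * frac_pow \<alpha> \<sigma>)"
    using powr_add[of \<sigma> 1 "- \<alpha>"] \<sigma>_bounds by (simp add: frac_pow_def frac_pow'_def power2_eq_square)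
  also have "\<dots> < (1 - \<alpha>) * frac_pow \<alpha> \<sigma>"
    using \<sigma>_bounds \<alpha>_less_1 by (simp add: frac_pow_def)
  also have "\<dots> \<le> (1 - \<alpha>) * (bcoef_unif \<alpha> \<sigma> + frac_pow \<alpha> \<sigma>)"
    using bcoef_unif_nonneg[of \<sigma>] \<sigma>_bounds \<alpha>_less_1 by simp
  \<comment> \<open>the choice \<open>\<sigma> = 1 - \<alpha> / 2\<close> enters here, as \<open>2 * \<sigma> - 1 = 1 - \<alpha>\<close>\<close>
  also have "\<dots> = (2 * \<sigma> - 1) * ccoef_unif \<alpha> \<sigma> (k + 1) k * Gamma (2 - \<alpha>)"
    using ccoef_unif_last[OF assms] Gamma_two_minus_pos \<sigma>_def by simp
  finally show ?thesis
    using Gamma_two_minus_pos by (simp add: mult.assoc)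
qed

end

end

section \<open>Small step sizes\<close>

lemma eventually_admissible_ccoef:
  assumes "0 < a0" and "a0 < T" and "0 < \<alpha>" and "\<alpha> < 1" and "\<sigma> = 1 - \<alpha> / 2"
  shows "eventually (\<lambda>N. admissible_weights \<sigma> k (\<lambda>i. ccoef a0 T N \<alpha> \<sigma> i k)) at_top"
proof -
  define scale where "scale N = a0 * real N / (T - a0)" for N :: nat
  define L where "L N x y = scale N * ln (tg a0 T N x / tg a0 T N y)" for N x y
  have "0 < \<sigma>" and "1 / 2 \<le> \<sigma>"
    using assms(4,5) by simp_all
  have "((\<lambda>N. L N x y) \<longlongrightarrow> x - y) at_top" for x y
    using tendsto_scaled_ln_grid_ratio[OF assms(1,2)] by (simp add: L_def scale_def)
  then have "eventually (\<lambda>N. admissible_weights \<sigma> k (\<lambda>i. ccoef_gen (L N) \<alpha> \<sigma> i k)) at_top"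
  proof (intro eventually_admissible_weights)
    show "((\<lambda>N. ccoef_gen (L N) \<alpha> \<sigma> i k) \<longlongrightarrow> ccoef_unif \<alpha> \<sigma> i k) at_top"
      if "\<And>x y. ((\<lambda>N. L N x y) \<longlongrightarrow> x - y) at_top" and "1 \<le> i" and "i \<le> k + 1" for i
      using ccoef_gen_tendsto[OF that(1)] that(2,3) \<open>0 < \<sigma>\<close> assms(4) by simp
  qed (use assms(3-5) \<open>1 / 2 \<le> \<sigma>\<close> ccoef_unif_first_pos ccoef_unif_strict_mono ccoef_unif_last_ineq
       in auto)
  moreover have "eventually (\<lambda>N. 0 < scale N) at_top"
    using eventually_gt_at_top[of 0] by eventually_elim (use assms(1,2) in \<open>simp add: scale_def\<close>)
  ultimately show ?thesis
  proof eventually_elim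
    case (elim N)
    have "ccoef_gen (L N) \<alpha> \<sigma> i k = scale N powr (- \<alpha>) * ccoef a0 T N \<alpha> \<sigma> i k" for i
      unfolding L_def ccoef_eq_ccoef_gen by (rule ccoef_gen_scale[OF elim(2)])
    then show ?case
      using elim admissible_weights_cmult_iff[of "scale N powr (- \<alpha>)"] by simp
  qed
qed

lemma eventually_at_top_imp_small_step:
  fixes c :: real
  assumes "eventually P at_top" and "0 < c"
  shows "\<exists>\<tau>0 > 0. \<forall>N. 0 < N \<and> c / real N \<le> \<tau>0 \<longrightarrow> P N"
proof -
  obtain N0 where N0: "\<And>N. N0 \<le> N \<Longrightarrow> P N"
    using assms(1) unfolding eventually_at_top_linorder by blast
  define M where "M = max N0 1"
  have "P N" if "0 < N" and "c / real N \<le> c / real M" for N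
  proof -
    have "M \<le> N"
      using that assms(2) by (simp add: M_def divide_le_cancel field_simps)
    then show ?thesis
      using N0 by (simp add: M_def)
  qed
  moreover have "0 < c / real M"
    using assms(2) by (simp add: M_def)
  ultimately show ?thesis
    by blast
qed

theorem lemma3p2:
  fixes a0 T \<alpha> \<sigma> :: real and k :: nat
  assumes "0 < a0" and "a0 < T"
    and "0 < \<alpha>" and "\<alpha> < 1"
    and "\<sigma> = 1 - \<alpha> / 2"
  shows "\<exists>\<tau>0 > 0. \<forall>N::nat. 0 < N \<and> k + 1 \<le> N \<and> (T - a0) / real N \<le> \<tau>0 \<longrightarrow>
     (\<forall>(a::real) (b::real) (M::nat) (v::nat \<Rightarrow> nat \<Rightarrow> real). a < b \<and> 0 < M \<longrightarrow>
        (\<Sum>i = 1..k + 1. ccoef a0 T N \<alpha> \<sigma> i k *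
            ip1 a b M (\<lambda>j. v i j - v (i - 1) j) (\<lambda>j. \<sigma> * v (k + 1) j + (1 - \<sigma>) * v k j))
        \<ge> 1 / 2 * (\<Sum>i = 1..k + 1. ccoef a0 T N \<alpha> \<sigma> i k *
            (nrm1sq a b M (v i) - nrm1sq a b M (v (i - 1)))))
   \<and> (\<forall>(L::real) (M::nat) (w::nat \<Rightarrow> nat \<Rightarrow> nat \<Rightarrow> real).
        0 < L \<and> 0 < M \<and> (\<forall>i \<le> k + 1. in_S0 M (w i)) \<longrightarrow>
        (\<Sum>i = 1..k + 1. ccoef a0 T N \<alpha> \<sigma> i k *
            ip2 L M (\<lambda>j l. w i j l - w (i - 1) j l) (\<lambda>j l. \<sigma> * w (k + 1) j l + (1 - \<sigma>) * w k j l))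
        \<ge> 1 / 2 * (\<Sum>i = 1..k + 1. ccoef a0 T N \<alpha> \<sigma> i k *
            (nrm2sq L M (w i) - nrm2sq L M (w (i - 1)))))"
proof -
  obtain \<tau>0 where "0 < \<tau>0" and \<tau>0: "\<forall>N. 0 < N \<and> (T - a0) / real N \<le> \<tau>0 \<longrightarrow>
      admissible_weights \<sigma> k (\<lambda>i. ccoef a0 T N \<alpha> \<sigma> i k)"
    using eventually_at_top_imp_small_step[OF eventually_admissible_ccoef[OF assms, of k], of "T - a0"]
      assms(2)
    by auto
  then have admissible: "admissible_weights \<sigma> k (\<lambda>i. ccoef a0 T N \<alpha> \<sigma> i k)"
    if "0 < N \<and> k + 1 \<le> N \<and> (T - a0) / real N \<le> \<tau>0" for N
    using that by blast
  show ?thesis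
    by (intro exI[of _ \<tau>0] conjI allI impI \<open>0 < \<tau>0\<close> ip1_energy_ineq ip2_energy_ineq admissible)
      auto
qed

end
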